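(* Let $F$ be a complete nonarchimedean field with ring of integers $\mathbf{o}_F$ and maximal ideal $m_F$, and let $A$ be an $n\times n$ matrix over $F$. Let $\lambda_1,\dots,\lambda_n$ be the eigenvalues of $A$, ordered so that $|\lambda_1|\ge\dots\ge|\lambda_n|$, and let $\sigma_1\ge\dots\ge\sigma_n$ be the singular values of $A$. Suppose that for some $i\in\{1,\dots,n-1\}$ we have \[ |\lambda_i|>|\lambda_{i+1}| \quad\text{and}\quad \sigma_1\cdots\sigma_i=|\lambda_1\cdots\lambda_i|. \] Suppose $U,V\in GL_n(\mathbf{o}_F)$ are congruent to the identity matrix modulo $m_F$. Then the product of the $i$ eigenvalues of $UAV$ of largest norm has norm $|\lambda_1\cdots\lambda_i|$.
   Context: The eigenvalues of a matrix over $F$ are taken in an algebraic extension of $F$, equipped with the unique extension of the norm. The singular values $\sigma_1\ge\dots\ge\sigma_n$ of an $n\times n$ matrix $M$ over $F$ are defined by $\sigma_j=e^{-s_j}$, where $s_1,\dots,s_n$ is the sequence such that, for each $k=1,\dots,n$, $s_1+\dots+s_k$ is the minimum valuation $-\log|\cdot|$ of a $k\times k$ minor of $M$; equivalently $\sigma_1\cdots\sigma_k$ is the maximum norm of a $k\times k$ minor of $M$. *)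

theory Defs
  imports "Jordan_Normal_Form.Char_Poly" "Jordan_Normal_Form.DL_Submatrix"
begin

definition nonarch_abs :: "('a::field \<Rightarrow> real) \<Rightarrow> bool" where
  "nonarch_abs v \<longleftrightarrow>
     (\<forall>x. v x \<ge> 0) \<and> (\<forall>x. v x = 0 \<longleftrightarrow> x = 0) \<and>
     (\<forall>x y. v (x * y) = v x * v y) \<and>
     (\<forall>x y. v (x + y) \<le> max (v x) (v y))"

definition abs_complete :: "('a::field \<Rightarrow> real) \<Rightarrow> bool" where
  "abs_complete v \<longleftrightarrow>
     (\<forall>X :: nat \<Rightarrow> 'a.
        (\<forall>e>0. \<exists>N. \<forall>m\<ge>N. \<forall>k\<ge>N. v (X m - X k) < e) \<longrightarrow>
        (\<exists>L. \<forall>e>0. \<exists>N. \<forall>m\<ge>N. v (X m - L) < e))"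

definition complete_nonarch_field :: "('a::field \<Rightarrow> real) \<Rightarrow> bool" where
  "complete_nonarch_field v \<longleftrightarrow> nonarch_abs v \<and> abs_complete v"

definition valued_alg_ext ::
    "('f::field \<Rightarrow> real) \<Rightarrow> ('f \<Rightarrow> 'k::field) \<Rightarrow> ('k \<Rightarrow> real) \<Rightarrow> bool" where
  "valued_alg_ext vF \<iota> vK \<longleftrightarrow>
     \<iota> 0 = 0 \<and> \<iota> 1 = 1 \<and> (\<forall>a b. \<iota> (a + b) = \<iota> a + \<iota> b) \<and>
     (\<forall>a b. \<iota> (a * b) = \<iota> a * \<iota> b) \<and>
     (\<forall>x::'k. \<exists>p::'f poly. p \<noteq> 0 \<and> poly (map_poly \<iota> p) x = 0) \<and>
     nonarch_abs vK \<and> (\<forall>a. vK (\<iota> a) = vF a)"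

definition sorted_eigenvalues ::
    "('f::field \<Rightarrow> 'k::field) \<Rightarrow> ('k \<Rightarrow> real) \<Rightarrow> 'f mat \<Rightarrow> 'k list \<Rightarrow> bool" where
  "sorted_eigenvalues \<iota> vK A ls \<longleftrightarrow>
     length ls = dim_row A \<and>
     char_poly (map_mat \<iota> A) = (\<Prod>l\<leftarrow>ls. [:- l, 1:]) \<and>
     sorted_wrt (\<lambda>a b. vK a \<ge> vK b) ls"

text \<open>Product "\<sigma>_1 \<cdots> \<sigma>_k" of the k largest singular values: the maximum
  absolute value of a "k \<times> k" minor of A.\<close>
definition sv_prod :: "('f::field \<Rightarrow> real) \<Rightarrow> nat \<Rightarrow> 'f mat \<Rightarrow> real" where
  "sv_prod v k A = Max {v (det (submatrix A I J)) | I J.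
      I \<subseteq> {..<dim_row A} \<and> J \<subseteq> {..<dim_col A} \<and> card I = k \<and> card J = k}"

text \<open>U lies in "GL_n(o_F)" and is congruent to the identity modulo "m_F".\<close>
definition unipotent_mod_m :: "('f::field \<Rightarrow> real) \<Rightarrow> nat \<Rightarrow> 'f mat \<Rightarrow> bool" where
  "unipotent_mod_m v n U \<longleftrightarrow>
     U \<in> carrier_mat n n \<and>
     (\<forall>i<n. \<forall>j<n. v (U $$ (i,j)) \<le> 1) \<and> v (det U) = 1 \<and>
     (\<forall>i<n. \<forall>j<n. v (U $$ (i,j) - (1\<^sub>m n) $$ (i,j)) < 1)"

end

theory Submission
  imports Defs
begin

text \<open>All estimates take place over \<open>K\<close>. Put \<open>B = U A V\<close> and
  \<open>S = \<sigma>\<^sub>1 \<cdots> \<sigma>\<^sub>i = |\<lambda>\<^sub>1 \<cdots> \<lambda>\<^sub>i|\<close>. By Cauchy--Binet every \<open>i \<times> i\<close> minor of \<open>B\<close> is a sum of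
  products of minors of \<open>U\<close>, \<open>A\<close> and \<open>V\<close>. The minors of \<open>U\<close> and \<open>V\<close> have norm at most 1, the
  non-principal ones norm less than 1, and the principal ones are congruent to 1; hence all
  \<open>i \<times> i\<close> minors of \<open>B\<close> have norm at most \<open>S\<close>, and each principal one differs from the
  corresponding minor of \<open>A\<close> by an element of norm less than \<open>S\<close>.

  The sum of the principal \<open>i \<times> i\<close> minors is the elementary symmetric function \<open>e\<^sub>i\<close> of the
  eigenvalues. For \<open>A\<close> the gap makes the term \<open>\<lambda>\<^sub>1 \<cdots> \<lambda>\<^sub>i\<close> of \<open>e\<^sub>i\<close> strictly dominant, so
  \<open>|e\<^sub>i(\<lambda>)| = S\<close>; by the congruence \<open>|e\<^sub>i(\<mu>)| = S\<close> as well, and \<open>|e\<^sub>i(\<mu>)| \<le> |\<mu>\<^sub>1 \<cdots> \<mu>\<^sub>i|\<close>.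
  Conversely, triangularizing \<open>B\<close> shows that \<open>\<mu>\<^sub>1 \<cdots> \<mu>\<^sub>i\<close> is an eigenvalue of the \<open>i\<close>-th
  compound matrix of \<open>B\<close>, whose entries are the \<open>i \<times> i\<close> minors, so \<open>|\<mu>\<^sub>1 \<cdots> \<mu>\<^sub>i| \<le> S\<close>.\<close>

section \<open>Minors and the Cauchy--Binet formula\<close>

abbreviation subsets_of_size :: "nat \<Rightarrow> nat \<Rightarrow> nat set set" where
  "subsets_of_size N k \<equiv> {L. L \<subseteq> {..<N} \<and> card L = k}"

lemma finite_subsets_of_size: "finite (subsets_of_size N k)"
  by (rule finite_subset[of _ "Pow {..<N}"]) auto

lemma subsets_of_size_finite: "L \<in> subsets_of_size N k \<Longrightarrow> finite L"
  using finite_subset[of L "{..<N}"] by auto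

lemma atLeastLessThan_in_subsets_of_size: "k \<le> N \<Longrightarrow> {0..<k} \<in> subsets_of_size N k"
  by auto

lemma subsets_of_size_subset_eq:
  "L' \<in> subsets_of_size N k \<Longrightarrow> L \<in> subsets_of_size N k \<Longrightarrow> L' \<subseteq> L \<Longrightarrow> L' = L"
  by (rule card_subset_eq[OF subsets_of_size_finite]) auto

lemma pick_bij_betw:
  assumes "finite L"
  shows "bij_betw (pick L) {0..<card L} L"
proof -
  have inj: "inj_on (pick L) {0..<card L}"
  proof (rule inj_onI, rule ccontr)
    fix x y assume "x \<in> {0..<card L}" "y \<in> {0..<card L}" "pick L x = pick L y" "x \<noteq> y"
    thus False using pick_mono[of x L y] pick_mono[of y L x] by (cases "x < y") auto
  qed
  have "pick L ` {0..<card L} \<subseteq> L" by (auto intro: pick_in_set)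
  moreover have "card (pick L ` {0..<card L}) = card L" using card_image[OF inj] by simp
  ultimately have "pick L ` {0..<card L} = L" using assms card_subset_eq by blast
  with inj show ?thesis unfolding bij_betw_def by simp
qed

lemma pick_less:
  "L \<in> subsets_of_size N k \<Longrightarrow> a < k \<Longrightarrow> pick L a < N"
  using pick_in_set[of a L] by auto

lemma pick_surj:
  assumes L: "L \<in> subsets_of_size N k" and x: "x \<in> L"
  obtains a where "a < k" "pick L a = x"
proof -
  have "x \<in> pick L ` {0..<card L}"
    using bij_betw_imp_surj_on[OF pick_bij_betw[OF subsets_of_size_finite[OF L]]] x by simp
  thus thesis using that L by auto
qed

lemma pick_inj_iff:
  assumes L: "L \<in> subsets_of_size N k" and "a < k" "b < k"
  shows "pick L a = pick L b \<longleftrightarrow> a = b"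
  using bij_betw_imp_inj_on[OF pick_bij_betw[OF subsets_of_size_finite[OF L]]] assms
  by (auto simp: inj_on_eq_iff)

lemma submatrix_carrier:
  assumes "A \<in> carrier_mat n m" "I \<subseteq> {..<n}" "J \<subseteq> {..<m}"
  shows "submatrix A I J \<in> carrier_mat (card I) (card J)"
proof -
  have rows: "{i. i < dim_row A \<and> i \<in> I} = I" using assms(1,2) by fastforce
  have cols: "{j. j < dim_col A \<and> j \<in> J} = J" using assms(1,3) by fastforce
  show ?thesis by (rule carrier_matI, unfold dim_submatrix rows cols, rule refl, rule refl)
qed

lemma submatrix_index_subset:
  assumes "A \<in> carrier_mat n m" "I \<subseteq> {..<n}" "J \<subseteq> {..<m}" "a < card I" "b < card J"
  shows "submatrix A I J $$ (a,b) = A $$ (pick I a, pick J b)"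
proof -
  have rows: "{i. i < dim_row A \<and> i \<in> I} = I" using assms(1,2) by fastforce
  have cols: "{j. j < dim_col A \<and> j \<in> J} = J" using assms(1,3) by fastforce
  show ?thesis by (rule submatrix_index, unfold rows cols, rule assms(4), rule assms(5))
qed

lemma submatrix_map_mat: "submatrix (map_mat f A) I J = map_mat f (submatrix A I J)"
proof (rule eq_matI)
  show "dim_row (submatrix (map_mat f A) I J) = dim_row (map_mat f (submatrix A I J))"
    by (simp add: dim_submatrix)
  show "dim_col (submatrix (map_mat f A) I J) = dim_col (map_mat f (submatrix A I J))"
    by (simp add: dim_submatrix)
  fix a b assume a: "a < dim_row (map_mat f (submatrix A I J))" and b: "b < dim_col (map_mat f (submatrix A I J))"
  hence a': "a < card {i. i < dim_row A \<and> i \<in> I}" and b': "b < card {j. j < dim_col A \<and> j \<in> J}"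
    by (simp_all add: dim_submatrix)
  have a'': "a < card {i. i < dim_row (map_mat f A) \<and> i \<in> I}" and b'': "b < card {j. j < dim_col (map_mat f A) \<and> j \<in> J}"
    using a' b' by simp_all
  have pa: "pick I a < dim_row A" using pick_le[OF a'] .
  have pb: "pick J b < dim_col A" using pick_le[OF b'] .
  show "submatrix (map_mat f A) I J $$ (a,b) = map_mat f (submatrix A I J) $$ (a,b)"
    unfolding submatrix_index[OF a'' b''] using a b pa pb submatrix_index[OF a' b'] by simp
qed

lemma det_submatrix_expand:
  assumes A: "A \<in> carrier_mat n m" and I: "I \<in> subsets_of_size n k" and J: "J \<in> subsets_of_size m k"
  shows "det (submatrix A I J) =
    (\<Sum>p | p permutes {0..<k}. signof p * (\<Prod>a = 0..<k. A $$ (pick I a, pick J (p a))))"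
proof -
  have C: "submatrix A I J \<in> carrier_mat k k" using submatrix_carrier[OF A, of I J] I J by simp
  show ?thesis unfolding det_def'[OF C]
  proof (rule sum.cong[OF refl])
    fix p assume "p \<in> {p. p permutes {0..<k}}"
    hence p: "p permutes {0..<k}" by simp
    have "submatrix A I J $$ (a, p a) = A $$ (pick I a, pick J (p a))" if "a \<in> {0..<k}" for a
      using submatrix_index_subset[OF A, of I J a "p a"] permutes_in_image[OF p] that I J by simp
    thus "signof p * (\<Prod>a = 0..<k. submatrix A I J $$ (a, p a)) =
        signof p * (\<Prod>a = 0..<k. A $$ (pick I a, pick J (p a)))" by simp
  qed
qed

lemma det_zero_row:
  assumes A: "A \<in> carrier_mat n n" and k: "k < n" and zero: "\<And>j. j < n \<Longrightarrow> A $$ (k,j) = 0"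
  shows "det A = 0"
  unfolding det_def'[OF A]
proof (rule sum.neutral, rule ballI)
  fix p assume "p \<in> {p. p permutes {0..<n}}"
  hence "A $$ (k, p k) = 0" using zero permutes_in_image k by fastforce
  hence "(\<Prod>i = 0..<n. A $$ (i, p i)) = 0" using k by (intro prod_zero) auto
  thus "signof p * (\<Prod>i = 0..<n. A $$ (i, p i)) = 0" by simp
qed

definition image_rank :: "(nat \<Rightarrow> nat) \<Rightarrow> nat \<Rightarrow> nat \<Rightarrow> nat" where
  "image_rank f k a = (if a < k then card {x \<in> f ` {0..<k}. x < f a} else a)"

lemma image_rank:
  assumes inj: "inj_on f {0..<k}"
  shows image_rank_permutes: "image_rank f k permutes {0..<k}"
    and pick_image_rank: "\<And>a. a < k \<Longrightarrow> pick (f ` {0..<k}) (image_rank f k a) = f a"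
proof -
  show pick: "\<And>a. a < k \<Longrightarrow> pick (f ` {0..<k}) (image_rank f k a) = f a"
    unfolding image_rank_def using pick_card_in_set by simp
  have card: "card (f ` {0..<k}) = k" using card_image[OF inj] by simp
  show "image_rank f k permutes {0..<k}"
  proof (rule inj_on_nat_permutes)
    show "inj_on (image_rank f k) {0..<k}"
      by (rule inj_onI) (metis pick inj atLeastLessThan_iff inj_on_def)
    show "image_rank f k \<in> {0..<k} \<rightarrow> {0..<k}"
    proof
      fix a assume a: "a \<in> {0..<k}"
      have "{x \<in> f ` {0..<k}. x < f a} \<subset> f ` {0..<k}" using a by auto
      thus "image_rank f k a \<in> {0..<k}"
        using a psubset_card_mono[of "f ` {0..<k}"] card by (simp add: image_rank_def)
    qed
  qed (auto simp: image_rank_def)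
qed

text \<open>An injective map \<open>f\<close> from \<open>{0..<k}\<close> to \<open>{0..<m}\<close> is determined by its image \<open>L\<close>
  and the permutation \<open>q\<close> with \<open>f = pick L \<circ> q\<close>.\<close>

lemma inj_maps_bij_betw_subsets_permutations:
  "bij_betw (\<lambda>f. (f ` {0..<k}, image_rank f k))
     {f \<in> {0..<k} \<rightarrow>\<^sub>E {0..<m}. inj_on f {0..<k}}
     (subsets_of_size m k \<times> {q. q permutes {0..<k}})"
proof (rule bij_betw_byWitness[where f' = "\<lambda>(L,q). restrict (\<lambda>a. pick L (q a)) {0..<k}"])
  let ?K = "{0..<k}"
  show "\<forall>f \<in> {f \<in> ?K \<rightarrow>\<^sub>E {0..<m}. inj_on f ?K}.
      (\<lambda>(L,q). restrict (\<lambda>a. pick L (q a)) ?K) (f ` ?K, image_rank f k) = f"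
    by (auto intro!: extensionalityI[where A = ?K] simp: pick_image_rank PiE_iff)
  show "(\<lambda>f. (f ` ?K, image_rank f k)) ` {f \<in> ?K \<rightarrow>\<^sub>E {0..<m}. inj_on f ?K}
      \<subseteq> subsets_of_size m k \<times> {q. q permutes ?K}"
    by (auto simp: card_image image_rank_permutes)
  show "\<forall>Lq \<in> subsets_of_size m k \<times> {q. q permutes ?K}.
      (\<lambda>f. (f ` ?K, image_rank f k)) ((\<lambda>(L,q). restrict (\<lambda>a. pick L (q a)) ?K) Lq) = Lq"
  proof (intro ballI, elim SigmaE)
    fix Lq L q assume L: "L \<in> subsets_of_size m k" and "q \<in> {q. q permutes ?K}" and Lq: "Lq = (L,q)"
    hence q: "q permutes ?K" by simp
    define f where "f = restrict (\<lambda>a. pick L (q a)) ?K"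
    have "f ` ?K = pick L ` (q ` ?K)" unfolding f_def by auto
    also have "q ` ?K = ?K" using permutes_image[OF q] .
    also have "pick L ` ?K = L"
      using pick_bij_betw[OF subsets_of_size_finite[OF L]] L unfolding bij_betw_def by simp
    finally have img: "f ` ?K = L" .
    have "image_rank f k a = q a" for a
    proof (cases "a < k")
      case True
      hence "q a < card L" using permutes_in_image[OF q] L by simp
      thus ?thesis using True card_pick[of "q a" L] unfolding image_rank_def img by (simp add: f_def)
    qed (use q in \<open>auto simp: image_rank_def permutes_def\<close>)
    thus "(\<lambda>f. (f ` ?K, image_rank f k)) ((\<lambda>(L,q). restrict (\<lambda>a. pick L (q a)) ?K) Lq) = Lq"
      using img unfolding Lq f_def by auto
  qed
  show "(\<lambda>(L,q). restrict (\<lambda>a. pick L (q a)) ?K) ` (subsets_of_size m k \<times> {q. q permutes ?K})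
      \<subseteq> {f \<in> ?K \<rightarrow>\<^sub>E {0..<m}. inj_on f ?K}"
  proof (intro image_subsetI, elim SigmaE)
    fix Lq L q assume L: "L \<in> subsets_of_size m k" and "q \<in> {q. q permutes ?K}" and Lq: "Lq = (L,q)"
    hence q: "q permutes ?K" by simp
    have "pick L (q a) < m" if "a < k" for a
      using that permutes_in_image[OF q] pick_less[OF L] by simp
    moreover have "inj_on (\<lambda>a. pick L (q a)) ?K"
      using pick_inj_iff[OF L] permutes_in_image[OF q] permutes_inj[OF q]
      by (auto simp: inj_on_def inj_def)
    ultimately show "(\<lambda>(L,q). restrict (\<lambda>a. pick L (q a)) ?K) Lq \<in> {f \<in> ?K \<rightarrow>\<^sub>E {0..<m}. inj_on f ?K}"
      using L unfolding Lq by (auto simp: inj_on_def)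
  qed
qed

context
  fixes X Y :: "'a::comm_ring_1 mat" and n m n' k :: nat and I J :: "nat set"
  assumes X: "X \<in> carrier_mat n m" and Y: "Y \<in> carrier_mat m n'"
    and I: "I \<in> subsets_of_size n k" and J: "J \<in> subsets_of_size n' k"
begin

private abbreviation rows_of :: "(nat \<Rightarrow> nat) \<Rightarrow> 'a mat" where
  "rows_of f \<equiv> mat k k (\<lambda>(a,b). Y $$ (f a, pick J b))"

private lemma det_submatrix_mult_expand:
  "det (submatrix (X * Y) I J) =
    (\<Sum>f \<in> {0..<k} \<rightarrow>\<^sub>E {0..<m}. (\<Prod>a = 0..<k. X $$ (pick I a, f a)) * det (rows_of f))"
proof -
  let ?K = "{0..<k}" and ?P = "{p. p permutes {0..<k}}"
  have XY: "X * Y \<in> carrier_mat n n'" using X Y by simp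
  have "det (submatrix (X * Y) I J) =
      (\<Sum>p\<in>?P. signof p * (\<Prod>a\<in>?K. \<Sum>l<m. X $$ (pick I a, l) * Y $$ (l, pick J (p a))))"
    unfolding det_submatrix_expand[OF XY I J]
    by (intro sum.cong refl arg_cong2[where f = "(*)"] prod.cong)
      (use X Y I J pick_less permutes_in_image in \<open>auto simp: scalar_prod_def lessThan_atLeast0\<close>)
  also have "\<dots> = (\<Sum>p\<in>?P. signof p *
      (\<Sum>f \<in> ?K \<rightarrow>\<^sub>E {0..<m}. \<Prod>a\<in>?K. X $$ (pick I a, f a) * Y $$ (f a, pick J (p a))))"
    by (simp add: prod_sum_PiE lessThan_atLeast0)
  also have "\<dots> = (\<Sum>p\<in>?P. \<Sum>f \<in> ?K \<rightarrow>\<^sub>E {0..<m}.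
      (\<Prod>a\<in>?K. X $$ (pick I a, f a)) * (signof p * (\<Prod>a\<in>?K. Y $$ (f a, pick J (p a)))))"
    by (simp add: sum_distrib_left prod.distrib ac_simps)
  also have "\<dots> = (\<Sum>f \<in> ?K \<rightarrow>\<^sub>E {0..<m}. (\<Prod>a\<in>?K. X $$ (pick I a, f a)) *
      (\<Sum>p\<in>?P. signof p * (\<Prod>a\<in>?K. Y $$ (f a, pick J (p a)))))"
    by (subst sum.swap) (simp add: sum_distrib_left)
  also have "\<dots> = (\<Sum>f \<in> ?K \<rightarrow>\<^sub>E {0..<m}. (\<Prod>a\<in>?K. X $$ (pick I a, f a)) * det (rows_of f))"
    by (intro sum.cong refl arg_cong2[where f = "(*)"])
      (auto simp: det_def'[of _ k] intro!: sum.cong prod.cong dest: permutes_in_image)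
  finally show ?thesis .
qed

private lemma det_rows_of_inj:
  assumes f: "f \<in> {0..<k} \<rightarrow>\<^sub>E {0..<m}" "inj_on f {0..<k}"
  shows "det (rows_of f) = signof (image_rank f k) * det (submatrix Y (f ` {0..<k}) J)"
proof -
  let ?L = "f ` {0..<k}"
  have L: "?L \<in> subsets_of_size m k" using f by (auto simp: card_image PiE_iff)
  have YL: "submatrix Y ?L J \<in> carrier_mat k k" using submatrix_carrier[OF Y, of ?L J] L J by simp
  have "rows_of f = mat k k (\<lambda>(a,b). submatrix Y ?L J $$ (image_rank f k a, b))"
  proof (rule eq_matI)
    fix a b assume "a < dim_row (mat k k (\<lambda>(a,b). submatrix Y ?L J $$ (image_rank f k a, b)))"
      and "b < dim_col (mat k k (\<lambda>(a,b). submatrix Y ?L J $$ (image_rank f k a, b)))"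
    hence a: "a < k" and b: "b < k" by auto
    have "image_rank f k a < k" using permutes_in_image[OF image_rank_permutes[OF f(2)]] a by simp
    hence "submatrix Y ?L J $$ (image_rank f k a, b) = Y $$ (f a, pick J b)"
      using submatrix_index_subset[OF Y, of ?L J "image_rank f k a" b] L J b pick_image_rank[OF f(2) a]
      by simp
    thus "rows_of f $$ (a,b) = mat k k (\<lambda>(a,b). submatrix Y ?L J $$ (image_rank f k a, b)) $$ (a,b)"
      using a b by simp
  qed auto
  thus ?thesis using det_permute_rows[OF YL image_rank_permutes[OF f(2)]] by simp
qed

theorem cauchy_binet:
  "det (submatrix (X * Y) I J) =
    (\<Sum>L \<in> subsets_of_size m k. det (submatrix X I L) * det (submatrix Y L J))"
proof -
  let ?K = "{0..<k}" and ?P = "{q. q permutes {0..<k}}"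
  let ?Inj = "{f \<in> ?K \<rightarrow>\<^sub>E {0..<m}. inj_on f ?K}"
  let ?g = "\<lambda>(L,q). (\<Prod>a\<in>?K. X $$ (pick I a, pick L (q a))) * (signof q * det (submatrix Y L J))"
  have "det (submatrix (X * Y) I J) = (\<Sum>f\<in>?Inj. (\<Prod>a\<in>?K. X $$ (pick I a, f a)) * det (rows_of f))"
    unfolding det_submatrix_mult_expand
  proof (rule sum.mono_neutral_right)
    show "\<forall>f \<in> (?K \<rightarrow>\<^sub>E {0..<m}) - ?Inj. (\<Prod>a\<in>?K. X $$ (pick I a, f a)) * det (rows_of f) = 0"
    proof
      fix f assume "f \<in> (?K \<rightarrow>\<^sub>E {0..<m}) - ?Inj"
      then obtain a b where ab: "a < k" "b < k" "a \<noteq> b" "f a = f b" unfolding inj_on_def by auto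
      have "det (rows_of f) = 0"
        by (rule det_identical_rows[OF _ ab(3)], insert ab, auto intro!: eq_vecI)
      thus "(\<Prod>a\<in>?K. X $$ (pick I a, f a)) * det (rows_of f) = 0" by simp
    qed
  qed (auto simp: finite_PiE)
  also have "\<dots> = (\<Sum>f\<in>?Inj. ?g (f ` ?K, image_rank f k))"
    by (intro sum.cong refl) (auto simp: det_rows_of_inj pick_image_rank)
  also have "\<dots> = sum ?g (subsets_of_size m k \<times> ?P)"
    by (rule sum.reindex_bij_betw[OF inj_maps_bij_betw_subsets_permutations])
  also have "\<dots> = (\<Sum>L \<in> subsets_of_size m k. det (submatrix X I L) * det (submatrix Y L J))"
    unfolding sum.cartesian_product[symmetric]
    by (intro sum.cong refl)
      (auto simp: det_submatrix_expand[OF X I] sum_distrib_left sum_distrib_right ac_simps)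
  finally show ?thesis .
qed

end

section \<open>Principal minors and compound matrices\<close>

lemma det_submatrix_mult3:
  fixes X Y Z :: "'a::comm_ring_1 mat"
  assumes X: "X \<in> carrier_mat n n" and Y: "Y \<in> carrier_mat n n" and Z: "Z \<in> carrier_mat n n"
    and I: "I \<in> subsets_of_size n k" and J: "J \<in> subsets_of_size n k"
  shows "det (submatrix (X * Y * Z) I J) = (\<Sum>L2 \<in> subsets_of_size n k. \<Sum>L1 \<in> subsets_of_size n k.
      det (submatrix X I L1) * det (submatrix Y L1 L2) * det (submatrix Z L2 J))"
proof -
  have XY: "X * Y \<in> carrier_mat n n" using X Y by simp
  have "det (submatrix (X * Y * Z) I J) =
      (\<Sum>L2 \<in> subsets_of_size n k. det (submatrix (X * Y) I L2) * det (submatrix Z L2 J))"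
    using XY Z I J by (rule cauchy_binet)
  also have "\<dots> = (\<Sum>L2 \<in> subsets_of_size n k. \<Sum>L1 \<in> subsets_of_size n k.
      det (submatrix X I L1) * det (submatrix Y L1 L2) * det (submatrix Z L2 J))"
  proof (rule sum.cong[OF refl])
    fix L2 assume L2: "L2 \<in> subsets_of_size n k"
    have "det (submatrix (X * Y) I L2) = (\<Sum>L1 \<in> subsets_of_size n k.
        det (submatrix X I L1) * det (submatrix Y L1 L2))"
      using X Y I L2 by (rule cauchy_binet)
    thus "det (submatrix (X * Y) I L2) * det (submatrix Z L2 J) = (\<Sum>L1 \<in> subsets_of_size n k.
        det (submatrix X I L1) * det (submatrix Y L1 L2) * det (submatrix Z L2 J))"
      by (simp add: sum_distrib_right)
  qed
  finally show ?thesis .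
qed

lemma det_submatrix_one:
  assumes L': "L' \<in> subsets_of_size N k" and L: "L \<in> subsets_of_size N k"
  shows "det (submatrix (1\<^sub>m N :: 'a::comm_ring_1 mat) L' L) = (if L' = L then 1 else 0)"
proof -
  let ?S = "submatrix (1\<^sub>m N :: 'a mat) L' L"
  have S: "?S \<in> carrier_mat k k" using submatrix_carrier[of "1\<^sub>m N" N N L' L] L L' by simp
  have entry: "?S $$ (a,b) = (if pick L' a = pick L b then 1 else 0)" if "a < k" "b < k" for a b
    using submatrix_index_subset[of "1\<^sub>m N" N N L' L a b] L L' pick_less[OF L'] pick_less[OF L] that
    by simp
  show ?thesis
  proof (cases "L' = L")
    case True
    hence "?S = 1\<^sub>m k" using S entry pick_inj_iff[OF L] by (intro eq_matI) auto
    thus ?thesis using True by simp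
  next
    case False
    then obtain x where x: "x \<in> L'" "x \<notin> L" using subsets_of_size_subset_eq[OF L' L] by blast
    then obtain a where a: "a < k" "pick L' a = x" using pick_surj[OF L'] by blast
    have "det ?S = 0"
    proof (rule det_zero_row[OF S a(1)])
      fix b assume "b < k"
      thus "?S $$ (a,b) = 0" using entry[OF a(1)] a x pick_in_set[of b L] L by auto
    qed
    thus ?thesis using False by simp
  qed
qed

lemma det_principal_submatrix_upper_triangular:
  assumes T: "T \<in> carrier_mat N N" and ut: "upper_triangular T" and L: "L \<in> subsets_of_size N k"
  shows "det (submatrix T L L) = (\<Prod>l\<in>L. T $$ (l,l))"
proof -
  let ?S = "submatrix T L L"
  have S: "?S \<in> carrier_mat k k" using submatrix_carrier[OF T, of L L] L by simp
  have entry: "?S $$ (a,b) = T $$ (pick L a, pick L b)" if "a < k" "b < k" for a b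
    using submatrix_index_subset[OF T, of L L a b] L that by simp
  have "upper_triangular ?S"
  proof (rule upper_triangularI)
    fix a b assume "b < a" "a < dim_row ?S"
    moreover hence "pick L b < pick L a" using pick_mono[of a L b] S L by simp
    ultimately show "?S $$ (a,b) = 0" using entry S ut pick_less[OF L] T by auto
  qed
  hence "det ?S = (\<Prod>a = 0..<k. T $$ (pick L a, pick L a))"
    using det_upper_triangular[OF _ S] S entry by (simp add: prod_list_diag_prod)
  also have "\<dots> = (\<Prod>l\<in>L. T $$ (l,l))"
    using prod.reindex_bij_betw[OF pick_bij_betw[OF subsets_of_size_finite[OF L]]] L by simp
  finally show ?thesis .
qed

lemma det_submatrix_upper_triangular_initial_cols:
  assumes T: "T \<in> carrier_mat N N" and ut: "upper_triangular T" and L: "L \<in> subsets_of_size N k"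
    and kN: "k \<le> N" and ne: "L \<noteq> {0..<k}"
  shows "det (submatrix T L {0..<k}) = 0"
proof -
  let ?S = "submatrix T L {0..<k}"
  have K: "{0..<k} \<in> subsets_of_size N k" using kN by auto
  have S: "?S \<in> carrier_mat k k" using submatrix_carrier[OF T, of L "{0..<k}"] L K by simp
  have "\<not> L \<subseteq> {0..<k}" using subsets_of_size_subset_eq[OF L K] ne by blast
  then obtain x where x: "x \<in> L" "x \<notin> {0..<k}" by blast
  then obtain a where a: "a < k" "pick L a = x" using pick_surj[OF L] by blast
  show ?thesis
  proof (rule det_zero_row[OF S a(1)])
    fix b assume b: "b < k"
    have "pick {0..<k} b < k" using pick_in_set[of b "{0..<k}"] b by auto
    moreover have "k \<le> pick L a" using a x by simp
    ultimately show "?S $$ (a,b) = 0"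
      using submatrix_index_subset[OF T, of L "{0..<k}" a b] a b x L K ut T pick_less[OF L]
      by (auto intro!: upper_triangularD)
  qed
qed

context
  fixes B T P Q :: "'a::comm_ring_1 mat" and N :: nat
  assumes sim: "similar_mat_wit B T P Q" and N: "B \<in> carrier_mat N N"
begin

private lemma carriers: "P \<in> carrier_mat N N" "Q \<in> carrier_mat N N" "T \<in> carrier_mat N N"
  and inverse: "P * Q = 1\<^sub>m N" "Q * P = 1\<^sub>m N" and B: "B = P * T * Q"
  using similar_mat_witD[OF carrier_matD(1)[OF N, symmetric] sim] by simp_all

lemma sum_principal_minors_similar:
  "(\<Sum>S \<in> subsets_of_size N k. det (submatrix B S S)) = (\<Sum>L \<in> subsets_of_size N k. det (submatrix T L L))"
proof -
  let ?Ls = "subsets_of_size N k"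
  let ?t = "\<lambda>S L1 L2. det (submatrix P S L1) * det (submatrix T L1 L2) * det (submatrix Q L2 S)"
  have "(\<Sum>S\<in>?Ls. det (submatrix B S S)) = (\<Sum>S\<in>?Ls. \<Sum>L2\<in>?Ls. \<Sum>L1\<in>?Ls. ?t S L1 L2)"
    unfolding B using carriers by (intro sum.cong refl det_submatrix_mult3) auto
  also have "\<dots> = (\<Sum>L2\<in>?Ls. \<Sum>S\<in>?Ls. \<Sum>L1\<in>?Ls. ?t S L1 L2)"
    by (rule sum.swap)
  also have "\<dots> = (\<Sum>L2\<in>?Ls. \<Sum>L1\<in>?Ls. \<Sum>S\<in>?Ls. ?t S L1 L2)"
    by (rule sum.cong[OF refl], rule sum.swap)
  also have "\<dots> = (\<Sum>L1\<in>?Ls. \<Sum>L2\<in>?Ls. \<Sum>S\<in>?Ls. ?t S L1 L2)"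
    by (rule sum.swap)
  also have "\<dots> = (\<Sum>L1\<in>?Ls. \<Sum>L2\<in>?Ls. det (submatrix T L1 L2) *
      (\<Sum>S\<in>?Ls. det (submatrix Q L2 S) * det (submatrix P S L1)))"
    by (simp add: sum_distrib_left ac_simps)
  also have "\<dots> = (\<Sum>L1\<in>?Ls. \<Sum>L2\<in>?Ls. det (submatrix T L1 L2) * (if L2 = L1 then 1 else 0))"
    using carriers by (intro sum.cong refl)
      (simp add: cauchy_binet[symmetric] inverse det_submatrix_one)
  also have "\<dots> = (\<Sum>L\<in>?Ls. det (submatrix T L L))"
    by (simp add: finite_subsets_of_size if_distrib cong: if_cong)
  finally show ?thesis .
qed

text \<open>The vector of initial column minors of \<open>P\<close> is an eigenvector of the \<open>k\<close>-th compound
  matrix of \<open>B\<close>, with eigenvalue the product of the first \<open>k\<close> diagonal entries of \<open>T\<close>.\<close>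

lemma compound_eigenvector:
  assumes ut: "upper_triangular T" and kN: "k \<le> N" and S: "S \<in> subsets_of_size N k"
  shows "(\<Sum>L \<in> subsets_of_size N k. det (submatrix B S L) * det (submatrix P L {0..<k})) =
    (\<Prod>j = 0..<k. T $$ (j,j)) * det (submatrix P S {0..<k})"
proof -
  have K: "{0..<k} \<in> subsets_of_size N k" using kN by auto
  have BP: "B * P = P * T"
    using carriers inverse by (simp add: B assoc_mult_mat[of _ N N _ N _ N])
  have "(\<Sum>L \<in> subsets_of_size N k. det (submatrix B S L) * det (submatrix P L {0..<k})) =
      det (submatrix (P * T) S {0..<k})"
    unfolding BP[symmetric] using N carriers S K by (intro cauchy_binet[symmetric]) auto
  also have "\<dots> = (\<Sum>L \<in> subsets_of_size N k. det (submatrix P S L) * det (submatrix T L {0..<k}))"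
    using carriers S K by (intro cauchy_binet) auto
  also have "\<dots> = det (submatrix P S {0..<k}) * det (submatrix T {0..<k} {0..<k})"
    using det_submatrix_upper_triangular_initial_cols[OF carriers(3) ut _ kN] K
    by (subst sum.remove[OF finite_subsets_of_size K]) (auto intro!: sum.neutral)
  finally show ?thesis
    using det_principal_submatrix_upper_triangular[OF carriers(3) ut K] by (simp add: ac_simps)
qed

lemma compound_eigenvector_nonzero:
  assumes kN: "k \<le> N"
  shows "\<exists>L \<in> subsets_of_size N k. det (submatrix P L {0..<k}) \<noteq> 0"
proof (rule ccontr)
  assume none: "\<not> ?thesis"
  have K: "{0..<k} \<in> subsets_of_size N k" using kN by auto
  have "det (submatrix (Q * P) {0..<k} {0..<k}) =
      (\<Sum>L \<in> subsets_of_size N k. det (submatrix Q {0..<k} L) * det (submatrix P L {0..<k}))"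
    using carriers K by (intro cauchy_binet) auto
  also have "\<dots> = 0" using none by simp
  finally show False using det_submatrix_one[OF K K, where 'a = 'a] inverse by simp
qed

end

section \<open>Triangularization\<close>

lemma eigenvector_completion:
  fixes v :: "'a::field vec"
  assumes v: "v \<in> carrier_vec N" and nz: "v \<noteq> 0\<^sub>v N"
  obtains P Q where "P \<in> carrier_mat N N" "Q \<in> carrier_mat N N" "P * Q = 1\<^sub>m N" "Q * P = 1\<^sub>m N"
    "col P 0 = v"
proof -
  obtain j where j: "j < N" "v $ j \<noteq> 0"
    using nz v by (metis carrier_vecD eq_vecI index_zero_vec)
  define t where "t = Transposition.transpose 0 j"
  have t: "t permutes {0..<N}" unfolding t_def using j by (intro permutes_swap_id) auto
  have tt: "t (t a) = a" for a unfolding t_def by (simp add: transpose_def)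
  have tN: "a < N \<Longrightarrow> t a < N" for a using permutes_in_image[OF t] by simp
  define R where "R = mat N N (\<lambda>(a,b). if b = 0 then v $ (t a) else if a = b then 1 else 0)"
  have R: "R \<in> carrier_mat N N" unfolding R_def by simp
  have "det R = (\<Prod>i = 0..<N. R $$ (i,i))"
    using det_lower_triangular[OF _ R] by (simp add: R_def prod_list_diag_prod)
  also have "\<dots> = (\<Prod>i = 0..<N. if i = 0 then v $ j else 1)"
    by (rule prod.cong) (auto simp: R_def t_def)
  also have "\<dots> = v $ j" using j by (simp add: prod.If_cases)
  finally have detR: "det R = v $ j" .
  define P where "P = mat N N (\<lambda>(a,b). R $$ (t a, b))"
  have P: "P \<in> carrier_mat N N" unfolding P_def by simp
  have "det P = signof t * det R" unfolding P_def by (rule det_permute_rows[OF R t])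
  hence "det P \<noteq> 0" using detR j by (simp add: sign_def)
  hence "P \<in> Units (ring_mat TYPE('a) N undefined)" by (rule det_non_zero_imp_unit[OF P])
  then obtain Q where "Q \<in> carrier_mat N N" "P * Q = 1\<^sub>m N" "Q * P = 1\<^sub>m N"
    unfolding Units_def ring_mat_def by auto
  moreover have "col P 0 = v"
    using v j tN by (intro eq_vecI) (auto simp: P_def R_def tt)
  ultimately show thesis using that P by blast
qed

lemma similar_to_eigenvalue_block:
  fixes B :: "'a::field mat"
  assumes B: "B \<in> carrier_mat (Suc n) (Suc n)" and ev: "eigenvector B v mu"
  obtains C2 C4 P Q where "C2 \<in> carrier_mat 1 n" "C4 \<in> carrier_mat n n"
    "similar_mat_wit B (four_block_mat (mat 1 1 (\<lambda>_. mu)) C2 (0\<^sub>m n 1) C4) P Q"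
proof -
  let ?N = "Suc n"
  have v: "v \<in> carrier_vec ?N" "v \<noteq> 0\<^sub>v ?N" "B *\<^sub>v v = mu \<cdot>\<^sub>v v"
    using ev B unfolding eigenvector_def by auto
  obtain P Q where P: "P \<in> carrier_mat ?N ?N" and Q: "Q \<in> carrier_mat ?N ?N"
    and PQ: "P * Q = 1\<^sub>m ?N" and QP: "Q * P = 1\<^sub>m ?N" and colP: "col P 0 = v"
    using eigenvector_completion[OF v(1,2)] by blast
  define C where "C = Q * B * P"
  have C: "C \<in> carrier_mat ?N ?N" unfolding C_def using P Q B by simp
  have BP: "B * P \<in> carrier_mat ?N ?N" using B P by simp
  have "col C 0 = Q *\<^sub>v col (B * P) 0"
    unfolding C_def assoc_mult_mat[OF Q B P] by (rule col_mult2[OF Q BP], simp)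
  also have "col (B * P) 0 = B *\<^sub>v col P 0" by (rule col_mult2[OF B P], simp)
  also have "Q *\<^sub>v (B *\<^sub>v col P 0) = mu \<cdot>\<^sub>v (Q *\<^sub>v col P 0)"
    unfolding colP v(3) using mult_mat_vec[OF Q v(1)] by simp
  also have "Q *\<^sub>v col P 0 = col (Q * P) 0" by (rule col_mult2[symmetric, OF Q P], simp)
  finally have colC: "col C 0 = mu \<cdot>\<^sub>v unit_vec ?N 0" unfolding QP by simp
  define C2 where "C2 = mat 1 n (\<lambda>(a,b). C $$ (0, Suc b))"
  define C4 where "C4 = mat n n (\<lambda>(a,b). C $$ (Suc a, Suc b))"
  have "C = four_block_mat (mat 1 1 (\<lambda>_. mu)) C2 (0\<^sub>m n 1) C4"
  proof (rule eq_matI)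
    fix a b assume "a < dim_row (four_block_mat (mat 1 1 (\<lambda>_. mu)) C2 (0\<^sub>m n 1) C4)"
      and "b < dim_col (four_block_mat (mat 1 1 (\<lambda>_. mu)) C2 (0\<^sub>m n 1) C4)"
    hence a: "a < ?N" and b: "b < ?N" by (auto simp: C4_def)
    have "C $$ (a,0) = (if a = 0 then mu else 0)"
      using arg_cong[OF colC, of "\<lambda>w. w $ a"] a C by simp
    thus "C $$ (a,b) = four_block_mat (mat 1 1 (\<lambda>_. mu)) C2 (0\<^sub>m n 1) C4 $$ (a,b)"
      using a b by (cases a; cases b) (auto simp: C2_def C4_def)
  qed (use C in \<open>auto simp: C4_def\<close>)
  moreover have "similar_mat_wit B C P Q"
  proof (rule similar_mat_witI[OF PQ QP _ B C P Q])
    have "P * C * Q = (P * Q) * B * (P * Q)"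
      using P Q B by (simp add: C_def assoc_mult_mat[of _ ?N ?N _ ?N _ ?N])
    thus "B = P * C * Q" using B PQ by simp
  qed
  ultimately show thesis using that[of C2 C4 P Q] by (simp add: C2_def C4_def)
qed

lemma similar_mat_wit_four_block_lower:
  assumes C1: "C1 \<in> carrier_mat 1 1" and C2: "C2 \<in> carrier_mat 1 n" and C4: "C4 \<in> carrier_mat n n"
    and sim: "similar_mat_wit C4 T P Q"
  shows "similar_mat_wit (four_block_mat C1 C2 (0\<^sub>m n 1) C4) (four_block_mat C1 (C2 * P) (0\<^sub>m n 1) T)
    (four_block_mat (1\<^sub>m 1) (0\<^sub>m 1 n) (0\<^sub>m n 1) P) (four_block_mat (1\<^sub>m 1) (0\<^sub>m 1 n) (0\<^sub>m n 1) Q)"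
proof -
  have P: "P \<in> carrier_mat n n" and Q: "Q \<in> carrier_mat n n" and T: "T \<in> carrier_mat n n"
    and PQ: "P * Q = 1\<^sub>m n" and QP: "Q * P = 1\<^sub>m n" and C4PTQ: "C4 = P * T * Q"
    using similar_mat_witD[OF carrier_matD(1)[OF C4, symmetric] sim] by simp_all
  show ?thesis
  proof (rule similar_mat_witI)
    show "four_block_mat (1\<^sub>m 1) (0\<^sub>m 1 n) (0\<^sub>m n 1) P * four_block_mat (1\<^sub>m 1) (0\<^sub>m 1 n) (0\<^sub>m n 1) Q
        = 1\<^sub>m (1 + n)"
      using P Q PQ by (subst mult_four_block_mat[of _ 1 1 _ n _ n]) auto
    show "four_block_mat (1\<^sub>m 1) (0\<^sub>m 1 n) (0\<^sub>m n 1) Q * four_block_mat (1\<^sub>m 1) (0\<^sub>m 1 n) (0\<^sub>m n 1) P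
        = 1\<^sub>m (1 + n)"
      using P Q QP by (subst mult_four_block_mat[of _ 1 1 _ n _ n]) auto
    have "four_block_mat (1\<^sub>m 1) (0\<^sub>m 1 n) (0\<^sub>m n 1) P * four_block_mat C1 (C2 * P) (0\<^sub>m n 1) T
        = four_block_mat C1 (C2 * P) (0\<^sub>m n 1) (P * T)"
      using P T C1 C2 by (subst mult_four_block_mat[of _ 1 1 _ n _ n]) auto
    also have "\<dots> * four_block_mat (1\<^sub>m 1) (0\<^sub>m 1 n) (0\<^sub>m n 1) Q
        = four_block_mat C1 (C2 * P * Q) (0\<^sub>m n 1) (P * T * Q)"
      using P Q T C1 C2 by (subst mult_four_block_mat[of _ 1 1 _ n _ n]) auto
    finally show "four_block_mat C1 C2 (0\<^sub>m n 1) C4 =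
        four_block_mat (1\<^sub>m 1) (0\<^sub>m 1 n) (0\<^sub>m n 1) P * four_block_mat C1 (C2 * P) (0\<^sub>m n 1) T *
        four_block_mat (1\<^sub>m 1) (0\<^sub>m 1 n) (0\<^sub>m n 1) Q"
      using C2 P Q PQ by (simp add: C4PTQ assoc_mult_mat[OF C2 P Q])
  qed (use C1 C2 C4 P Q T in auto)
qed

theorem triangularizable:
  fixes B :: "'a::field mat"
  assumes "B \<in> carrier_mat n n" and "char_poly B = (\<Prod>l\<leftarrow>ls. [:-l, 1:])"
  obtains T P Q where "similar_mat_wit B T P Q" "upper_triangular T" "diag_mat T = ls"
  using assms
proof (induction n arbitrary: B ls thesis)
  case 0
  hence "similar_mat_wit B (1\<^sub>m 0) (1\<^sub>m 0) (1\<^sub>m 0)" "ls = []"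
    using degree_monic_char_poly[OF "0.prems"(2)] by (auto intro!: similar_mat_witI eq_matI simp: degree_linear_factors)
  thus ?case using "0.prems"(1)[of "1\<^sub>m 0"] by (auto simp: diag_mat_def)
next
  case (Suc n B ls)
  have B: "B \<in> carrier_mat (Suc n) (Suc n)" by fact
  obtain mu rest where ls: "ls = mu # rest"
    using degree_monic_char_poly[OF B] Suc.prems(3) by (cases ls) auto
  have "poly (char_poly B) mu = 0" using Suc.prems(3) ls by simp
  then obtain v where "eigenvector B v mu"
    using eigenvalue_root_char_poly[OF B] unfolding eigenvalue_def by blast
  then obtain C2 C4 P1 Q1 where C2: "C2 \<in> carrier_mat 1 n" and C4: "C4 \<in> carrier_mat n n"
    and sim1: "similar_mat_wit B (four_block_mat (mat 1 1 (\<lambda>_. mu)) C2 (0\<^sub>m n 1) C4) P1 Q1"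
    by (rule similar_to_eigenvalue_block[OF B])
  have C1: "mat 1 1 (\<lambda>_. mu) \<in> carrier_mat 1 1" by simp
  have "[:-mu, 1:] * char_poly C4 = char_poly (four_block_mat (mat 1 1 (\<lambda>_. mu)) C2 (0\<^sub>m n 1) C4)"
    using char_poly_four_block_zeros_col[OF C1 C2 C4]
    by (subst (asm) char_poly_upper_triangular[OF C1]) (auto simp: upper_triangular_def diag_mat_def)
  also have "\<dots> = [:-mu, 1:] * (\<Prod>l\<leftarrow>rest. [:-l, 1:])"
  proof -
    have "similar_mat B (four_block_mat (mat 1 1 (\<lambda>_. mu)) C2 (0\<^sub>m n 1) C4)"
      using sim1 unfolding similar_mat_def by blast
    thus ?thesis using char_poly_similar Suc.prems(3) ls by fastforce
  qed
  finally have "char_poly C4 = (\<Prod>l\<leftarrow>rest. [:-l, 1:])"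
    by (subst (asm) mult_left_cancel) auto
  then obtain T2 P2 Q2 where sim2: "similar_mat_wit C4 T2 P2 Q2"
    and ut2: "upper_triangular T2" and diag2: "diag_mat T2 = rest"
    using Suc.IH[OF _ C4] by blast
  have T2: "T2 \<in> carrier_mat n n"
    using similar_mat_witD[OF carrier_matD(1)[OF C4, symmetric] sim2] by simp
  define T where "T = four_block_mat (mat 1 1 (\<lambda>_. mu)) (C2 * P2) (0\<^sub>m n 1) T2"
  have "similar_mat_wit B T (P1 * four_block_mat (1\<^sub>m 1) (0\<^sub>m 1 n) (0\<^sub>m n 1) P2)
      (four_block_mat (1\<^sub>m 1) (0\<^sub>m 1 n) (0\<^sub>m n 1) Q2 * Q1)"
    unfolding T_def by (rule similar_mat_wit_trans[OF sim1 similar_mat_wit_four_block_lower[OF C1 C2 C4 sim2]])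
  moreover have "upper_triangular T"
  proof (rule upper_triangularI)
    fix a b assume "b < a" "a < dim_row T"
    thus "T $$ (a,b) = 0"
      using T2 ut2 by (cases a; cases b) (auto simp: T_def)
  qed
  moreover have "diag_mat T = ls"
  proof (rule nth_equalityI)
    show "length (diag_mat T) = length ls"
      using T2 arg_cong[OF diag2, of length] ls by (simp add: T_def diag_mat_def)
    fix j assume "j < length (diag_mat T)"
    hence j: "j < Suc n" using T2 by (simp add: T_def diag_mat_def)
    show "diag_mat T ! j = ls ! j"
    proof (cases j)
      case 0
      thus ?thesis using T2 ls by (simp add: diag_mat_def T_def del: upt_Suc)
    next
      case (Suc i)
      have "rest ! i = T2 $$ (i,i)"
        using diag2[symmetric] Suc j T2 by (simp add: diag_mat_def del: upt_Suc)
      thus ?thesis using Suc j T2 ls by (simp add: diag_mat_def T_def del: upt_Suc)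
    qed
  qed
  ultimately show ?case by (rule Suc.prems(1))
qed

section \<open>Ultrametric estimates\<close>

lemma prod_less_1:
  fixes g :: "'b \<Rightarrow> real"
  assumes "finite A" "a \<in> A" "\<And>b. b \<in> A \<Longrightarrow> 0 \<le> g b \<and> g b \<le> 1" "g a < 1"
  shows "prod g A < 1"
proof -
  have "prod g A = g a * prod g (A - {a})" using assms(1,2) by (rule prod.remove)
  also have "prod g (A - {a}) \<le> 1" using assms(3) by (intro prod_le_1) auto
  hence "g a * prod g (A - {a}) \<le> g a" using assms(2,3) by (simp add: mult_left_le)
  finally show ?thesis using assms(4) by simp
qed

context
  fixes f :: "nat \<Rightarrow> real" and N k :: nat and L :: "nat set"
  assumes nonneg: "\<And>i. 0 \<le> f i" and antimono: "\<And>i j. i \<le> j \<Longrightarrow> j < N \<Longrightarrow> f j \<le> f i"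
    and L: "L \<in> subsets_of_size N k" and k: "1 \<le> k" "k \<le> N"
begin

private lemma split_initial:
  defines "D1 \<equiv> L - {0..<k}" and "D2 \<equiv> {0..<k} - L"
  shows "prod f L = prod f (L \<inter> {0..<k}) * prod f D1"
    and "prod f {0..<k} = prod f (L \<inter> {0..<k}) * prod f D2"
    and "card D1 = card D2"
    and "\<And>l. l \<in> D1 \<Longrightarrow> f l \<le> f (k - 1)" and "\<And>l. l \<in> D2 \<Longrightarrow> f (k - 1) \<le> f l"
proof -
  let ?C = "L \<inter> {0..<k}"
  have finL: "finite L" using subsets_of_size_finite[OF L] .
  have L_split: "L = ?C \<union> D1" "?C \<inter> D1 = {}" unfolding D1_def by auto
  have K_split: "{0..<k} = ?C \<union> D2" "?C \<inter> D2 = {}" unfolding D2_def by auto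
  have fin: "finite ?C" "finite D1" "finite D2" using finL unfolding D1_def D2_def by auto
  show "prod f L = prod f ?C * prod f D1"
    by (subst L_split(1), rule prod.union_disjoint) (use fin L_split in auto)
  show "prod f {0..<k} = prod f ?C * prod f D2"
    by (subst K_split(1), rule prod.union_disjoint) (use fin K_split in auto)
  have "card L = card ?C + card D1"
    by (subst L_split(1), rule card_Un_disjoint) (use fin L_split in auto)
  moreover have "card {0..<k} = card ?C + card D2"
    by (subst K_split(1), rule card_Un_disjoint) (use fin K_split in auto)
  ultimately show "card D1 = card D2" using L by simp
  show "\<And>l. l \<in> D1 \<Longrightarrow> f l \<le> f (k - 1)" using L k unfolding D1_def by (intro antimono) auto
  show "\<And>l. l \<in> D2 \<Longrightarrow> f (k - 1) \<le> f l" using k unfolding D2_def by (intro antimono) auto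
qed

lemma prod_subset_le_prod_initial: "prod f L \<le> prod f {0..<k}"
proof -
  let ?D1 = "L - {0..<k}" and ?D2 = "{0..<k} - L"
  note split = split_initial
  have "prod f ?D1 \<le> f (k - 1) ^ card ?D1"
    using prod_mono[of ?D1 f "\<lambda>_. f (k - 1)"] split(4) nonneg by simp
  also have "\<dots> \<le> prod f ?D2"
    using prod_mono[of ?D2 "\<lambda>_. f (k - 1)" f] split(3,5) nonneg by simp
  finally show ?thesis
    unfolding split(1,2) by (rule mult_left_mono) (simp add: prod_nonneg nonneg)
qed

lemma prod_subset_less_prod_initial:
  assumes kN: "k < N" and gap: "f k < f (k - 1)" and ne: "L \<noteq> {0..<k}"
  shows "prod f L < prod f {0..<k}"
proof -
  let ?D1 = "L - {0..<k}" and ?D2 = "{0..<k} - L"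
  note split = split_initial
  have "?D1 \<noteq> {}"
    using subsets_of_size_subset_eq[OF L atLeastLessThan_in_subsets_of_size[OF k(2)]] ne by auto
  hence "card ?D1 > 0" using subsets_of_size_finite[OF L] card_gt_0_iff by blast
  have "prod f ?D1 \<le> f k ^ card ?D1"
  proof -
    have "f l \<le> f k" if "l \<in> ?D1" for l using that L by (intro antimono) auto
    thus ?thesis using prod_mono[of ?D1 f "\<lambda>_. f k"] nonneg by simp
  qed
  also have "\<dots> < f (k - 1) ^ card ?D1"
    using gap nonneg \<open>card ?D1 > 0\<close> by (intro power_strict_mono) auto
  also have "\<dots> \<le> prod f ?D2"
    using prod_mono[of ?D2 "\<lambda>_. f (k - 1)" f] split(3,5) nonneg by simp
  finally have "prod f ?D1 < prod f ?D2" .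
  moreover have "0 < prod f (L \<inter> {0..<k})"
  proof (rule prod_pos)
    fix l assume "l \<in> L \<inter> {0..<k}"
    hence "f (k - 1) \<le> f l" using k by (intro antimono) auto
    thus "0 < f l" using gap nonneg[of k] by linarith
  qed
  ultimately show ?thesis unfolding split(1,2) by simp
qed

end

locale nonarch_field =
  fixes v :: "'k::field \<Rightarrow> real"
  assumes nonarch: "nonarch_abs v"
begin

lemma v_nonneg: "0 \<le> v x" using nonarch unfolding nonarch_abs_def by blast
lemma v_eq_0_iff: "v x = 0 \<longleftrightarrow> x = 0" using nonarch unfolding nonarch_abs_def by blast
lemma v_mult: "v (x * y) = v x * v y" using nonarch unfolding nonarch_abs_def by blast
lemma v_add: "v (x + y) \<le> max (v x) (v y)" using nonarch unfolding nonarch_abs_def by blast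

lemma v_zero[simp]: "v 0 = 0" using v_eq_0_iff by simp

lemma v_one[simp]: "v 1 = 1"
  using v_mult[of 1 1] v_eq_0_iff[of 1] by simp

lemma v_uminus[simp]: "v (- x) = v x"
proof -
  have "v (-1) * v (-1) = 1" using v_mult[of "-1" "-1"] by simp
  hence "v (-1) = 1" using v_nonneg[of "-1"]
    by (metis abs_of_nonneg mult_cancel_right1 real_sqrt_abs2 real_sqrt_one)
  thus ?thesis using v_mult[of "-1" x] by simp
qed

lemma v_prod: "v (prod f A) = (\<Prod>a\<in>A. v (f a))"
  by (induction A rule: infinite_finite_induct) (auto simp: v_mult)

lemma v_signof[simp]: "v (signof p) = 1"
  by (simp add: sign_def)

lemma v_sum_le:
  assumes "finite A" "0 \<le> M" "\<And>a. a \<in> A \<Longrightarrow> v (f a) \<le> M"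
  shows "v (sum f A) \<le> M"
  using assms
proof (induction A rule: finite_induct)
  case (insert x F)
  have "v (f x) \<le> M" "v (sum f F) \<le> M" using insert by simp_all
  thus ?case using insert(1,2) by (simp add: order.trans[OF v_add])
qed simp

lemma v_sum_less:
  assumes "finite A" "0 < M" "\<And>a. a \<in> A \<Longrightarrow> v (f a) < M"
  shows "v (sum f A) < M"
  using assms
proof (induction A rule: finite_induct)
  case (insert x F)
  have "v (f x) < M" "v (sum f F) < M" using insert by simp_all
  thus ?case using insert(1,2) by (simp add: le_less_trans[OF v_add])
qed simp

lemma v_add_eq_left:
  assumes "v y < v x"
  shows "v (x + y) = v x"
proof -
  have "v x = v ((x + y) + (- y))" by simp
  also have "\<dots> \<le> max (v (x + y)) (v y)" using v_add[of "x + y" "- y"] by simp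
  finally show ?thesis using v_add[of x y] assms by linarith
qed

lemma v_le_1_if_near_1: "v (x - 1) < 1 \<Longrightarrow> v x \<le> 1"
  using v_add[of "x - 1" 1] by simp

lemma v_mult_near_1:
  assumes x: "v (x - 1) < 1" and y: "v (y - 1) < 1"
  shows "v (x * y - 1) < 1"
proof -
  have "v x * v (y - 1) \<le> v (y - 1)"
    using v_le_1_if_near_1[OF x] mult_right_mono[OF _ v_nonneg] by fastforce
  hence "v (x * (y - 1)) < 1" using y by (simp add: v_mult)
  moreover have eq: "x * y - 1 = x * (y - 1) + (x - 1)" by (simp add: algebra_simps)
  ultimately show ?thesis using x unfolding eq by (simp add: le_less_trans[OF v_add])
qed

lemma v_prod_near_1:
  "finite A \<Longrightarrow> (\<And>a. a \<in> A \<Longrightarrow> v (f a - 1) < 1) \<Longrightarrow> v (prod f A - 1) < 1"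
  by (induction A rule: finite_induct) (auto intro: v_mult_near_1)

lemma v_eigenvalue_le:
  fixes b :: "'i \<Rightarrow> 'i \<Rightarrow> 'k" and w :: "'i \<Rightarrow> 'k"
  assumes fin: "finite X" and nz: "\<exists>S\<in>X. w S \<noteq> 0"
    and eigen: "\<And>S. S \<in> X \<Longrightarrow> (\<Sum>L\<in>X. b S L * w L) = mu * w S"
    and bound: "\<And>S L. S \<in> X \<Longrightarrow> L \<in> X \<Longrightarrow> v (b S L) \<le> M" and M: "0 \<le> M"
  shows "v mu \<le> M"
proof -
  \<comment> \<open>evaluate the eigenvector equation at a coordinate of maximal absolute value\<close>
  define m where "m = Max ((\<lambda>S. v (w S)) ` X)"
  have "m \<in> (\<lambda>S. v (w S)) ` X" unfolding m_def using fin nz by (intro Max_in) auto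
  then obtain S0 where S0: "S0 \<in> X" and m: "m = v (w S0)" by blast
  have max: "\<And>L. L \<in> X \<Longrightarrow> v (w L) \<le> v (w S0)" unfolding m[symmetric] m_def using fin by simp
  obtain S1 where "S1 \<in> X" "w S1 \<noteq> 0" using nz by blast
  hence pos: "0 < v (w S0)" using max[of S1] v_nonneg[of "w S1"] v_eq_0_iff[of "w S1"] by simp
  have "v mu * v (w S0) = v (\<Sum>L\<in>X. b S0 L * w L)" using eigen[OF S0] by (simp add: v_mult)
  also have "\<dots> \<le> M * v (w S0)"
    using fin M pos bound[OF S0] max v_nonneg
    by (intro v_sum_le) (auto simp: v_mult intro: mult_mono)
  finally show ?thesis using pos by simp
qed

end

lemma finite_minor_values:
  "finite {v (det (submatrix A I J)) | I J.
     I \<subseteq> {..<dim_row A} \<and> J \<subseteq> {..<dim_col A} \<and> card I = k \<and> card J = k}"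
proof -
  have "{v (det (submatrix A I J)) | I J.
      I \<subseteq> {..<dim_row A} \<and> J \<subseteq> {..<dim_col A} \<and> card I = k \<and> card J = k}
    \<subseteq> (\<lambda>(I,J). v (det (submatrix A I J))) ` (Pow {..<dim_row A} \<times> Pow {..<dim_col A})" by auto
  thus ?thesis by (rule finite_subset) simp
qed

lemma minor_le_sv_prod:
  assumes "A \<in> carrier_mat n m" "I \<in> subsets_of_size n k" "J \<in> subsets_of_size m k"
  shows "v (det (submatrix A I J)) \<le> sv_prod v k A"
  unfolding sv_prod_def using assms by (intro Max_ge[OF finite_minor_values]) auto

lemma sv_prod_le:
  assumes A: "A \<in> carrier_mat n m" and "k \<le> n" "k \<le> m"
    and bound: "\<And>I J. I \<in> subsets_of_size n k \<Longrightarrow> J \<in> subsets_of_size m k \<Longrightarrow>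
      v (det (submatrix A I J)) \<le> M"
  shows "sv_prod v k A \<le> M"
  unfolding sv_prod_def
proof (rule Max.boundedI[OF finite_minor_values])
  show "{v (det (submatrix A I J)) | I J.
      I \<subseteq> {..<dim_row A} \<and> J \<subseteq> {..<dim_col A} \<and> card I = k \<and> card J = k} \<noteq> {}"
    using A assms(2,3) by (auto intro!: exI[of _ "{0..<k}"])
qed (use A bound in auto)

lemma valued_alg_ext_comm_ring_hom: "valued_alg_ext vF \<iota> vK \<Longrightarrow> comm_ring_hom \<iota>"
  by unfold_locales (auto simp: valued_alg_ext_def)

context
  fixes vF :: "'f::field \<Rightarrow> real" and \<iota> :: "'f \<Rightarrow> 'k::field" and vK :: "'k \<Rightarrow> real"
  assumes ext: "valued_alg_ext vF \<iota> vK"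
begin

interpretation comm_ring_hom \<iota> using ext by (rule valued_alg_ext_comm_ring_hom)

private lemma v_ext: "vK (\<iota> a) = vF a"
  using ext unfolding valued_alg_ext_def by blast

lemma sv_prod_map_mat: "sv_prod vK k (map_mat \<iota> A) = sv_prod vF k A"
  unfolding sv_prod_def by (simp add: submatrix_map_mat v_ext)

lemma unipotent_mod_m_map_mat:
  assumes U: "unipotent_mod_m vF n U"
  shows "unipotent_mod_m vK n (map_mat \<iota> U)"
proof -
  have "map_mat \<iota> U $$ (i,j) - 1\<^sub>m n $$ (i,j) = \<iota> (U $$ (i,j) - 1\<^sub>m n $$ (i,j))" if "i < n" "j < n" for i j
    using U that by (cases "i = j") (auto simp: unipotent_mod_m_def hom_minus)
  thus ?thesis using U unfolding unipotent_mod_m_def by (auto simp: v_ext)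
qed

lemma sorted_eigenvalues_map_mat:
  "sorted_eigenvalues \<iota> vK A ls \<longleftrightarrow> sorted_eigenvalues (\<lambda>x. x) vK (map_mat \<iota> A) ls"
proof -
  have "map_mat (\<lambda>x. x) (map_mat \<iota> A) = map_mat \<iota> A" by (rule eq_matI) auto
  thus ?thesis unfolding sorted_eigenvalues_def by simp
qed

end

definition esym :: "'a::comm_ring_1 list \<Rightarrow> nat \<Rightarrow> 'a" where
  "esym xs k = (\<Sum>L \<in> subsets_of_size (length xs) k. \<Prod>l\<in>L. xs ! l)"

lemma sum_principal_minors_eq_esym:
  fixes M :: "'a::field mat"
  assumes M: "M \<in> carrier_mat n n" and cp: "char_poly M = (\<Prod>l\<leftarrow>ls. [:-l, 1:])"
  shows "(\<Sum>S \<in> subsets_of_size n k. det (submatrix M S S)) = esym ls k"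
proof -
  obtain T P Q where sim: "similar_mat_wit M T P Q" and ut: "upper_triangular T" and diag: "diag_mat T = ls"
    using triangularizable[OF M cp] by blast
  have T: "T \<in> carrier_mat n n" using similar_mat_witD[OF carrier_matD(1)[OF M, symmetric] sim] by simp
  have len: "length ls = n" using arg_cong[OF diag, of length] T by (simp add: diag_mat_def)
  have nth: "ls ! l = T $$ (l,l)" if "l < n" for l using diag[symmetric] T that by (simp add: diag_mat_def)
  have "(\<Sum>S \<in> subsets_of_size n k. det (submatrix M S S)) =
      (\<Sum>L \<in> subsets_of_size n k. det (submatrix T L L))"
    by (rule sum_principal_minors_similar[OF sim M])
  also have "\<dots> = (\<Sum>L \<in> subsets_of_size n k. \<Prod>l\<in>L. T $$ (l,l))"
    by (intro sum.cong refl det_principal_submatrix_upper_triangular[OF T ut]) simp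
  also have "\<dots> = esym ls k"
    unfolding esym_def len using nth by (intro sum.cong refl prod.cong) auto
  finally show ?thesis .
qed

lemma prod_list_take_nth: "k \<le> length xs \<Longrightarrow> prod_list (take k xs) = (\<Prod>j = 0..<k. xs ! j)"
  by (simp add: prod.list_conv_set_nth min_absorb2)

lemma mult3_less:
  fixes x y z M :: real
  assumes "0 \<le> x" "0 \<le> y" "0 \<le> z" "x \<le> 1" "y \<le> M" "z \<le> 1" "x < 1 \<or> z < 1" "0 < M"
  shows "x * y * z < M"
proof (cases "x < 1")
  case True
  have "x * y * z \<le> x * y" using assms by (simp add: mult_left_le)
  also have "\<dots> \<le> x * M" using assms by (intro mult_left_mono) auto
  also have "\<dots> < M" using True assms by simp
  finally show ?thesis .
next
  case False
  hence "z < 1" using assms by simp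
  have "x * y * z \<le> y * z" using assms by (intro mult_right_mono) (auto simp: mult_left_le_one_le)
  also have "\<dots> \<le> M * z" using assms by (intro mult_right_mono) auto
  also have "\<dots> < M" using \<open>z < 1\<close> assms by simp
  finally show ?thesis .
qed

context nonarch_field
begin

lemma sv_prod_nonneg:
  assumes "A \<in> carrier_mat n m" "k \<le> n" "k \<le> m"
  shows "0 \<le> sv_prod v k A"
proof -
  have "v (det (submatrix A {0..<k} {0..<k})) \<le> sv_prod v k A"
    using assms by (intro minor_le_sv_prod[OF assms(1)]) auto
  thus ?thesis using v_nonneg order.trans by blast
qed

context
  fixes U :: "'k mat" and N :: nat
  assumes U: "U \<in> carrier_mat N N" and le1: "\<And>i j. i < N \<Longrightarrow> j < N \<Longrightarrow> v (U $$ (i,j)) \<le> 1"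
begin

lemma v_minor_le_1:
  assumes S: "S \<in> subsets_of_size N k" and L: "L \<in> subsets_of_size N k"
  shows "v (det (submatrix U S L)) \<le> 1"
  unfolding det_submatrix_expand[OF U S L]
proof (rule v_sum_le)
  fix p assume "p \<in> {p. p permutes {0..<k}}"
  hence p: "p permutes {0..<k}" by simp
  show "v (signof p * (\<Prod>a = 0..<k. U $$ (pick S a, pick L (p a)))) \<le> 1"
    using v_nonneg le1 pick_less[OF S] pick_less[OF L] permutes_in_image[OF p]
    by (simp add: v_mult v_prod, intro prod_le_1, auto)
qed (simp_all add: finite_permutations)

lemma v_minor_less_1:
  assumes off: "\<And>i j. i < N \<Longrightarrow> j < N \<Longrightarrow> i \<noteq> j \<Longrightarrow> v (U $$ (i,j)) < 1"
    and S: "S \<in> subsets_of_size N k" and L: "L \<in> subsets_of_size N k" and ne: "S \<noteq> L"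
  shows "v (det (submatrix U S L)) < 1"
proof -
  \<comment> \<open>every term of the Leibniz expansion meets a row of \<open>S\<close> outside \<open>L\<close>, hence an off-diagonal entry\<close>
  obtain x where x: "x \<in> S" "x \<notin> L" using subsets_of_size_subset_eq[OF S L] ne by blast
  then obtain a where a: "a < k" "pick S a = x" using pick_surj[OF S] by blast
  show ?thesis unfolding det_submatrix_expand[OF U S L]
  proof (rule v_sum_less)
    fix p assume "p \<in> {p. p permutes {0..<k}}"
    hence p: "p permutes {0..<k}" by simp
    have pa: "p a < k" using permutes_in_image[OF p] a by simp
    have "pick L (p a) \<in> L" using pick_in_set[of "p a" L] pa L by simp
    hence "pick S a \<noteq> pick L (p a)" using a x by auto
    hence "v (U $$ (pick S a, pick L (p a))) < 1"
      using off pick_less[OF S a(1)] pick_less[OF L pa] by blast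
    hence "(\<Prod>b = 0..<k. v (U $$ (pick S b, pick L (p b)))) < 1"
      using v_nonneg le1 pick_less[OF S] pick_less[OF L] permutes_in_image[OF p] a
      by (intro prod_less_1[of _ a]) auto
    thus "v (signof p * (\<Prod>b = 0..<k. U $$ (pick S b, pick L (p b)))) < 1"
      by (simp add: v_mult v_prod)
  qed (simp_all add: finite_permutations)
qed

lemma v_principal_minor_near_1:
  assumes off: "\<And>i j. i < N \<Longrightarrow> j < N \<Longrightarrow> i \<noteq> j \<Longrightarrow> v (U $$ (i,j)) < 1"
    and diag: "\<And>i. i < N \<Longrightarrow> v (U $$ (i,i) - 1) < 1"
    and S: "S \<in> subsets_of_size N k"
  shows "v (det (submatrix U S S) - 1) < 1"
proof -
  let ?P = "{p. p permutes {0..<k}}"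
  let ?t = "\<lambda>p. signof p * (\<Prod>a = 0..<k. U $$ (pick S a, pick S (p a)))"
  have eq: "det (submatrix U S S) - 1 = (?t id - 1) + sum ?t (?P - {id})"
    unfolding det_submatrix_expand[OF U S S]
    by (subst sum.remove[of _ id]) (auto simp: finite_permutations permutes_id)
  have "v (?t id - 1) < 1"
    using v_prod_near_1[of "{0..<k}" "\<lambda>a. U $$ (pick S a, pick S a)"] diag pick_less[OF S] by simp
  moreover have "v (sum ?t (?P - {id})) < 1"
  proof (rule v_sum_less)
    fix p assume "p \<in> ?P - {id}"
    hence p: "p permutes {0..<k}" "p \<noteq> id" by auto
    then obtain a where a: "p a \<noteq> a" by (metis eq_id_iff)
    have ak: "a < k" and pa: "p a < k" using a p(1) permutes_in_image[OF p(1)] unfolding permutes_def by auto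
    have "pick S a \<noteq> pick S (p a)" using pick_inj_iff[OF S ak pa] a by auto
    hence "v (U $$ (pick S a, pick S (p a))) < 1" using off pick_less[OF S ak] pick_less[OF S pa] by simp
    hence "(\<Prod>b = 0..<k. v (U $$ (pick S b, pick S (p b)))) < 1"
      using v_nonneg le1 pick_less[OF S] permutes_in_image[OF p(1)] ak
      by (intro prod_less_1[of _ a]) auto
    thus "v (?t p) < 1" by (simp add: v_mult v_prod)
  qed (simp_all add: finite_permutations)
  ultimately show ?thesis unfolding eq using v_add[of "?t id - 1" "sum ?t (?P - {id})"] by linarith
qed

end

end

lemma unipotent_mod_mD:
  assumes "unipotent_mod_m v n U"
  shows "U \<in> carrier_mat n n" and "\<And>i j. i < n \<Longrightarrow> j < n \<Longrightarrow> v (U $$ (i,j)) \<le> 1"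
    and "\<And>i j. i < n \<Longrightarrow> j < n \<Longrightarrow> i \<noteq> j \<Longrightarrow> v (U $$ (i,j)) < 1"
    and "\<And>i. i < n \<Longrightarrow> v (U $$ (i,i) - 1) < 1"
proof -
  have near: "v (U $$ (i,j) - 1\<^sub>m n $$ (i,j)) < 1" if "i < n" "j < n" for i j
    using assms that unfolding unipotent_mod_m_def by blast
  show "U \<in> carrier_mat n n" "\<And>i j. i < n \<Longrightarrow> j < n \<Longrightarrow> v (U $$ (i,j)) \<le> 1"
    using assms unfolding unipotent_mod_m_def by auto
  show "\<And>i j. i < n \<Longrightarrow> j < n \<Longrightarrow> i \<noteq> j \<Longrightarrow> v (U $$ (i,j)) < 1"
    and "\<And>i. i < n \<Longrightarrow> v (U $$ (i,i) - 1) < 1" using near by fastforce+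
qed

context nonarch_field
begin

lemma sv_prod_mult_le:
  assumes A: "A \<in> carrier_mat n n" and U: "U \<in> carrier_mat n n" and V: "V \<in> carrier_mat n n"
    and U1: "\<And>i j. i < n \<Longrightarrow> j < n \<Longrightarrow> v (U $$ (i,j)) \<le> 1"
    and V1: "\<And>i j. i < n \<Longrightarrow> j < n \<Longrightarrow> v (V $$ (i,j)) \<le> 1"
    and kn: "k \<le> n"
  shows "sv_prod v k (U * A * V) \<le> sv_prod v k A"
proof -
  let ?M = "sv_prod v k A"
  have M: "0 \<le> ?M" using sv_prod_nonneg[OF A kn kn] .
  show ?thesis
  proof (rule sv_prod_le[of _ n n])
    fix I J assume I: "I \<in> subsets_of_size n k" and J: "J \<in> subsets_of_size n k"
    show "v (det (submatrix (U * A * V) I J)) \<le> ?M"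
      unfolding det_submatrix_mult3[OF U A V I J]
    proof (intro v_sum_le finite_subsets_of_size M)
      fix L2 L1 assume L2: "L2 \<in> subsets_of_size n k" and L1: "L1 \<in> subsets_of_size n k"
      have "v (det (submatrix U I L1)) * v (det (submatrix A L1 L2)) \<le> 1 * ?M"
        using v_minor_le_1[OF U U1 I L1] minor_le_sv_prod[OF A L1 L2] v_nonneg
        by (intro mult_mono) auto
      hence "v (det (submatrix U I L1)) * v (det (submatrix A L1 L2)) * v (det (submatrix V L2 J))
          \<le> ?M * 1"
        using v_minor_le_1[OF V V1 L2 J] v_nonneg M by (intro mult_mono) auto
      thus "v (det (submatrix U I L1) * det (submatrix A L1 L2) * det (submatrix V L2 J)) \<le> ?M"
        by (simp add: v_mult)
    qed
  qed (use A U V kn in auto)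
qed

lemma v_principal_minor_mult_diff_less:
  assumes A: "A \<in> carrier_mat n n" and U: "unipotent_mod_m v n U" and V: "unipotent_mod_m v n V"
    and pos: "0 < sv_prod v k A" and S: "S \<in> subsets_of_size n k"
  shows "v (det (submatrix (U * A * V) S S) - det (submatrix A S S)) < sv_prod v k A"
proof -
  let ?Ls = "subsets_of_size n k" and ?M = "sv_prod v k A"
  note U' = unipotent_mod_mD[OF U] and V' = unipotent_mod_mD[OF V]
  let ?u = "\<lambda>L. det (submatrix U S L)" and ?w = "\<lambda>L. det (submatrix V L S)"
  let ?t = "\<lambda>(L2, L1). ?u L1 * det (submatrix A L1 L2) * ?w L2"
  have "det (submatrix (U * A * V) S S) = sum ?t (?Ls \<times> ?Ls)"
    by (simp add: det_submatrix_mult3[OF U'(1) A V'(1) S S] sum.cartesian_product)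
  also have "\<dots> = ?t (S, S) + sum ?t (?Ls \<times> ?Ls - {(S, S)})"
    using S by (intro sum.remove) (auto simp: finite_subsets_of_size)
  finally have eq: "det (submatrix (U * A * V) S S) - det (submatrix A S S) =
      det (submatrix A S S) * (?u S * ?w S - 1) + sum ?t (?Ls \<times> ?Ls - {(S, S)})"
    by (simp add: algebra_simps)
  have "v (?u S * ?w S - 1) < 1"
    using v_principal_minor_near_1[OF U'(1,2,3,4) S] v_principal_minor_near_1[OF V'(1,2,3,4) S]
    by (rule v_mult_near_1)
  hence "v (det (submatrix A S S)) * v (?u S * ?w S - 1) < ?M"
    using minor_le_sv_prod[OF A S S] pos v_nonneg
    by (metis le_less_trans mult_le_cancel_left1 mult_right_mono not_le)
  moreover have "v (sum ?t (?Ls \<times> ?Ls - {(S, S)})) < ?M"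
  proof (rule v_sum_less)
    fix L assume "L \<in> ?Ls \<times> ?Ls - {(S, S)}"
    then obtain L2 L1 where L: "L = (L2, L1)" "L1 \<in> ?Ls" "L2 \<in> ?Ls" "L1 \<noteq> S \<or> L2 \<noteq> S" by auto
    \<comment> \<open>an off-diagonal minor of \<open>U\<close> or of \<open>V\<close> occurs in the term\<close>
    have "v (?u L1) < 1 \<or> v (?w L2) < 1"
      using L v_minor_less_1[OF U'(1,2,3) S L(2)] v_minor_less_1[OF V'(1,2,3) L(3) S] by auto
    hence "v (?u L1) * v (det (submatrix A L1 L2)) * v (?w L2) < ?M"
      using v_nonneg v_minor_le_1[OF U'(1,2) S L(2)] minor_le_sv_prod[OF A L(2,3)]
        v_minor_le_1[OF V'(1,2) L(3) S] pos
      by (intro mult3_less) auto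
    thus "v (?t L) < ?M" unfolding L by (simp add: v_mult)
  qed (simp_all add: finite_subsets_of_size pos)
  ultimately show ?thesis unfolding eq by (simp add: v_mult le_less_trans[OF v_add])
qed

text \<open>The nonarchimedean analogue of Weyl's inequality \<open>|\<lambda>\<^sub>1 \<cdots> \<lambda>\<^sub>k| \<le> \<sigma>\<^sub>1 \<cdots> \<sigma>\<^sub>k\<close>,
  valid for the eigenvalues in any order.\<close>

lemma v_prod_eigenvalues_le_sv_prod:
  assumes M: "M \<in> carrier_mat n n" and cp: "char_poly M = (\<Prod>l\<leftarrow>mus. [:-l, 1:])" and kn: "k \<le> n"
  shows "v (\<Prod>j = 0..<k. mus ! j) \<le> sv_prod v k M"
proof -
  obtain T P Q where sim: "similar_mat_wit M T P Q" and ut: "upper_triangular T" and diag: "diag_mat T = mus"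
    using triangularizable[OF M cp] by blast
  have T: "T \<in> carrier_mat n n" using similar_mat_witD[OF carrier_matD(1)[OF M, symmetric] sim] by simp
  have "(\<Prod>j = 0..<k. T $$ (j,j)) = (\<Prod>j = 0..<k. mus ! j)"
    using diag[symmetric] T kn by (intro prod.cong) (auto simp: diag_mat_def)
  hence eigen: "(\<Sum>L \<in> subsets_of_size n k. det (submatrix M S L) * det (submatrix P L {0..<k})) =
      (\<Prod>j = 0..<k. mus ! j) * det (submatrix P S {0..<k})" if "S \<in> subsets_of_size n k" for S
    using compound_eigenvector[OF sim M ut kn that] by simp
  show ?thesis
    by (rule v_eigenvalue_le[OF finite_subsets_of_size compound_eigenvector_nonzero[OF sim M kn] eigen
        minor_le_sv_prod[OF M] sv_prod_nonneg[OF M kn kn]])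
qed

context
  fixes xs :: "'k list" and k :: nat
  assumes sorted: "sorted_wrt (\<lambda>a b. v a \<ge> v b) xs" and k: "1 \<le> k" "k \<le> length xs"
begin

private lemma v_nth_antimono: "i \<le> j \<Longrightarrow> j < length xs \<Longrightarrow> v (xs ! j) \<le> v (xs ! i)"
  using sorted unfolding sorted_wrt_iff_nth_less by (cases "i = j") auto

lemma v_esym_le_initial: "v (esym xs k) \<le> v (\<Prod>j = 0..<k. xs ! j)"
  unfolding esym_def
proof (rule v_sum_le[OF finite_subsets_of_size v_nonneg])
  fix L assume "L \<in> subsets_of_size (length xs) k"
  thus "v (\<Prod>l\<in>L. xs ! l) \<le> v (\<Prod>j = 0..<k. xs ! j)"
    unfolding v_prod using k
    by (intro prod_subset_le_prod_initial[where f = "\<lambda>l. v (xs ! l)", OF v_nonneg v_nth_antimono]) auto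
qed

lemma v_prod_initial_pos:
  assumes gap: "v (xs ! k) < v (xs ! (k - 1))"
  shows "0 < v (\<Prod>j = 0..<k. xs ! j)"
  unfolding v_prod
proof (rule prod_pos)
  fix l assume "l \<in> {0..<k}"
  hence "v (xs ! (k - 1)) \<le> v (xs ! l)" using k by (intro v_nth_antimono) auto
  thus "0 < v (xs ! l)" using gap v_nonneg[of "xs ! k"] by linarith
qed

lemma v_esym_eq_initial:
  assumes kn: "k < length xs" and gap: "v (xs ! k) < v (xs ! (k - 1))"
  shows "v (esym xs k) = v (\<Prod>j = 0..<k. xs ! j)"
proof -
  let ?Ls = "subsets_of_size (length xs) k" and ?g = "\<lambda>L. \<Prod>l\<in>L. xs ! l"
  have K: "{0..<k} \<in> ?Ls" using k by auto
  have eq: "esym xs k = ?g {0..<k} + sum ?g (?Ls - {{0..<k}})"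
    unfolding esym_def by (rule sum.remove[OF finite_subsets_of_size K])
  have "v (sum ?g (?Ls - {{0..<k}})) < v (?g {0..<k})"
  proof (rule v_sum_less)
    fix L assume "L \<in> ?Ls - {{0..<k}}"
    thus "v (?g L) < v (?g {0..<k})" unfolding v_prod
      by (intro prod_subset_less_prod_initial[where f = "\<lambda>l. v (xs ! l)",
            OF v_nonneg v_nth_antimono _ k kn gap]) auto
  qed (simp_all add: finite_subsets_of_size v_prod_initial_pos[OF gap])
  thus ?thesis unfolding eq by (rule v_add_eq_left)
qed

end

theorem v_prod_top_eigenvalues_unipotent_mult:
  assumes A: "A \<in> carrier_mat n n" and ls: "sorted_eigenvalues (\<lambda>x. x) v A ls"
    and i: "1 \<le> i" "i < n" and gap: "v (ls ! i) < v (ls ! (i - 1))"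
    and sv: "sv_prod v i A = v (prod_list (take i ls))"
    and U: "unipotent_mod_m v n U" and V: "unipotent_mod_m v n V"
    and mus: "sorted_eigenvalues (\<lambda>x. x) v (U * A * V) mus"
  shows "v (prod_list (take i mus)) = v (prod_list (take i ls))"
proof -
  let ?Ls = "subsets_of_size n i" and ?M = "sv_prod v i A"
  note U' = unipotent_mod_mD[OF U] and V' = unipotent_mod_mD[OF V]
  have UAV: "U * A * V \<in> carrier_mat n n" using U'(1) A V'(1) by simp
  have map_id: "map_mat (\<lambda>x. x) M = M" for M :: "'k mat" by (rule eq_matI) auto
  note ls = ls[unfolded sorted_eigenvalues_def map_id] and mus = mus[unfolded sorted_eigenvalues_def map_id]
  have len: "length ls = n" "length mus = n" using ls mus A UAV by auto
  have top: "?M = v (\<Prod>j = 0..<i. ls ! j)" using sv i len by (simp add: prod_list_take_nth)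
  have pos: "0 < ?M" unfolding top using ls i len gap by (intro v_prod_initial_pos) auto
  have esym_ls: "v (esym ls i) = ?M" unfolding top using ls i len gap by (intro v_esym_eq_initial) auto
  have "esym mus i - esym ls i =
      (\<Sum>S \<in> ?Ls. det (submatrix (U * A * V) S S) - det (submatrix A S S))"
    using sum_principal_minors_eq_esym[OF UAV] sum_principal_minors_eq_esym[OF A] ls mus
    by (simp add: sum_subtractf)
  also have "v \<dots> < ?M"
    using v_principal_minor_mult_diff_less[OF A U V pos] pos
    by (intro v_sum_less finite_subsets_of_size)
  finally have "v (esym mus i) = ?M"
    using v_add_eq_left[of "esym mus i - esym ls i" "esym ls i"] esym_ls by simp
  hence "?M \<le> v (\<Prod>j = 0..<i. mus ! j)" using mus i len by (metis v_esym_le_initial less_imp_le)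
  moreover have "v (\<Prod>j = 0..<i. mus ! j) \<le> sv_prod v i (U * A * V)"
    using mus i UAV by (intro v_prod_eigenvalues_le_sv_prod) auto
  moreover have "sv_prod v i (U * A * V) \<le> ?M" using A U'(1,2) V'(1,2) i by (intro sv_prod_mult_le) auto
  ultimately show ?thesis using top len i by (simp add: prod_list_take_nth)
qed

end

theorem proposition4p3:
  fixes vF :: "'f::field \<Rightarrow> real" and \<iota> :: "'f \<Rightarrow> 'k::field" and vK :: "'k \<Rightarrow> real"
    and n i :: nat and A U V :: "'f mat" and ls mus :: "'k list"
  assumes F: "complete_nonarch_field vF"
    and K: "valued_alg_ext vF \<iota> vK"
    and A: "A \<in> carrier_mat n n"
    and ls: "sorted_eigenvalues \<iota> vK A ls"
    and i: "1 \<le> i" "i \<le> n - 1"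
    and gap: "vK (ls ! (i - 1)) > vK (ls ! i)"
    and sv: "sv_prod vF i A = vK (prod_list (take i ls))"
    and U: "unipotent_mod_m vF n U"
    and V: "unipotent_mod_m vF n V"
    and mus: "sorted_eigenvalues \<iota> vK (U * A * V) mus"
  shows "vK (prod_list (take i mus)) = vK (prod_list (take i ls))"
proof -
  interpret comm_ring_hom \<iota> using K by (rule valued_alg_ext_comm_ring_hom)
  interpret nonarch_field vK using K by unfold_locales (simp add: valued_alg_ext_def)
  have "map_mat \<iota> (U * A * V) = map_mat \<iota> U * map_mat \<iota> A * map_mat \<iota> V"
    using mat_hom_mult[of "U * A" n n V n] mat_hom_mult[of U n n A n]
      unipotent_mod_mD(1)[OF U] A unipotent_mod_mD(1)[OF V] by simp
  hence "sorted_eigenvalues (\<lambda>x. x) vK (map_mat \<iota> U * map_mat \<iota> A * map_mat \<iota> V) mus"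
    using mus sorted_eigenvalues_map_mat[OF K] by simp
  moreover have "i < n" using i by linarith
  ultimately show ?thesis
    using v_prod_top_eigenvalues_unipotent_mult[of "map_mat \<iota> A" n ls i] A i gap
      ls[unfolded sorted_eigenvalues_map_mat[OF K]] sv[folded sv_prod_map_mat[OF K]]
      unipotent_mod_m_map_mat[OF K U] unipotent_mod_m_map_mat[OF K V]
    by simp
qed

end
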